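(* Let $\mathcal{H}$ be a family of simple graphs with $\rho:=\min\{\chi(H):H\in\mathcal{H}\}\geq 3$. Then \[\mathcal{E}_\mathcal{H}(k)=\Bigl(1+\frac{1}{\rho-2}+o(1)\Bigr)k,\] where $o(1)\to 0$ as $k\to\infty$.
   Context: All graphs are finite, simple and 2-uniform, without isolated vertices. For a graph $G$ and a family of graphs $\mathcal{H}$, $\operatorname{ex}(G,\mathcal{H})$ is the maximum number of edges of a subgraph $F\subseteq G$ that contains no member of $\mathcal{H}$ as a subgraph. For a positive integer $k$, $\mathcal{E}_\mathcal{H}(k):=\sup\{e(G): G \text{ a simple graph with } \operatorname{ex}(G,\mathcal{H})<k\}$. $\chi$ denotes chromatic number. *)

theory Defs
  imports Complex_Main "HOL-Library.Extended_Real"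
begin

text \<open>A finite simple graph, given by its edge set; each edge is a 2-element set of
vertices. The vertex set is the union of the edges (no isolated vertices).\<close>
definition graph :: "nat set set \<Rightarrow> bool" where
  "graph G \<longleftrightarrow> finite G \<and> (\<forall>e\<in>G. card e = 2)"

definition vertices :: "nat set set \<Rightarrow> nat set" where
  "vertices G = \<Union>G"

definition subgraph_of :: "nat set set \<Rightarrow> nat set set \<Rightarrow> bool" where
  "subgraph_of H G \<longleftrightarrow> (\<exists>f. inj_on f (vertices H) \<and> (\<forall>e\<in>H. f ` e \<in> G))"

definition proper_colouring :: "nat set set \<Rightarrow> (nat \<Rightarrow> nat) \<Rightarrow> nat \<Rightarrow> bool" where
  "proper_colouring H c k \<longleftrightarrow> (\<forall>v\<in>vertices H. c v < k) \<and>
      (\<forall>e\<in>H. \<forall>u\<in>e. \<forall>v\<in>e. u \<noteq> v \<longrightarrow> c u \<noteq> c v)"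

definition chromatic_number :: "nat set set \<Rightarrow> nat" where
  "chromatic_number H = (LEAST k. \<exists>c. proper_colouring H c k)"

definition free_of :: "nat set set set \<Rightarrow> nat set set \<Rightarrow> bool" where
  "free_of Hs F \<longleftrightarrow> (\<forall>H\<in>Hs. \<not> subgraph_of H F)"

definition ex :: "nat set set \<Rightarrow> nat set set set \<Rightarrow> nat" where
  "ex G Hs = Max {card F | F. F \<subseteq> G \<and> free_of Hs F}"

definition E_fun :: "nat set set set \<Rightarrow> nat \<Rightarrow> ereal" where
  "E_fun Hs k = Sup {ereal (real (card G)) | G. graph G \<and> ex G Hs < k}"

end

theory Submission
  imports Defs "HOL-Library.FuncSet" "HOL-Real_Asymp.Real_Asymp"
begin

(* Write rho = r + 1.

   Upper bound: a colouring of G with r colours that minimises the number of monochromatic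
   edges cannot be improved by recolouring a single vertex, so at most e(G)/r edges are
   monochromatic. The other edges form an r-colourable, hence H-free, subgraph; thus
   ex(G, H) >= (1 - 1/r) e(G) and E(k) <= r k / (r - 1).

   Lower bound: by the Erdos-Stone theorem, for fixed d > 0 and large n every subgraph of K_n
   with (1 - 1/r + d) C(n,2) edges contains the complete (r+1)-partite graph K_(r+1)(t), and with
   it every graph of chromatic number rho on at most t vertices. So ex(K_n, H) < k once
   k > (1 - 1/r + d) C(n,2), whence E(k) >= C(n,2), roughly k / (1 - 1/r + d).
   Erdos-Stone is proved from a dense graph by first passing to a subgraph of large minimum
   degree, and then adding one part at a time: among the many vertices joined to t vertices of
   every existing part, pigeonhole yields t vertices with the same such neighbourhoods. *)

lemma sum_card_filter_swap:
  assumes "finite A" "finite B"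
  shows "(\<Sum>a\<in>A. card {b\<in>B. P a b}) = (\<Sum>b\<in>B. card {a\<in>A. P a b})"
proof -
  have "(\<Sum>a\<in>A. card {b\<in>B. P a b}) = (\<Sum>a\<in>A. \<Sum>b\<in>B. if P a b then 1 else 0)"
    using assms by (simp add: sum.If_cases Int_def)
  also have "\<dots> = (\<Sum>b\<in>B. \<Sum>a\<in>A. if P a b then 1 else 0)" by (rule sum.swap)
  also have "\<dots> = (\<Sum>b\<in>B. card {a\<in>A. P a b})"
    using assms by (simp add: sum.If_cases Int_def)
  finally show ?thesis .
qed

lemma exists_large_fibre:
  assumes "finite Y" "f \<in> X \<rightarrow> Y" "card X > (t - 1) * card Y" "t \<ge> 1"
  shows "\<exists>y\<in>Y. t \<le> card {x\<in>X. f x = y}"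
proof (rule ccontr)
  assume "\<not> ?thesis"
  hence small: "\<forall>y\<in>Y. card {x\<in>X. f x = y} \<le> t - 1" by force
  have "X = (\<Union>y\<in>Y. {x\<in>X. f x = y})" using assms(2) by blast
  hence "card X \<le> (\<Sum>y\<in>Y. card {x\<in>X. f x = y})" by (metis card_UN_le assms(1))
  also have "\<dots> \<le> (\<Sum>y\<in>Y. t - 1)" by (rule sum_mono) (use small in blast)
  finally show False using assms(3) by (simp add: mult.commute)
qed

lemma real_choose_two: "real (n choose 2) = real n * (real n - 1) / 2"
proof -
  have "even (n * (n - 1))" by auto
  hence "real (n * (n - 1) div 2) = real (n * (n-1)) / 2" by (simp add: real_of_nat_div)
  thus ?thesis by (cases n) (simp_all add: choose_two algebra_simps)
qed

lemma card_2_obtain_other: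
  assumes "card e = 2" "v \<in> e"
  obtains u where "e = {v,u}" "u \<noteq> v"
  using assms by (auto simp: card_2_iff doubleton_eq_iff)

definition degree_in :: "nat set set \<Rightarrow> nat set \<Rightarrow> nat \<Rightarrow> nat" where
  "degree_in F U v = card {u\<in>U. {u,v} \<in> F}"

definition complete_partite :: "nat set set \<Rightarrow> nat \<Rightarrow> nat \<Rightarrow> (nat \<Rightarrow> nat set) \<Rightarrow> bool" where
  "complete_partite F s t A \<longleftrightarrow> (\<forall>i<s. finite (A i) \<and> card (A i) = t) \<and>
     (\<forall>i<s. \<forall>j<s. i \<noteq> j \<longrightarrow> A i \<inter> A j = {}) \<and>
     (\<forall>i<s. \<forall>j<s. i \<noteq> j \<longrightarrow> (\<forall>x\<in>A i. \<forall>y\<in>A j. {x,y} \<in> F))"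

lemma complete_partite_subsets:
  assumes "complete_partite F s T A" "\<forall>i<s. C i \<subseteq> A i \<and> card (C i) = t"
  shows "complete_partite F s t C"
  using assms unfolding complete_partite_def by (meson disjoint_iff finite_subset subsetD)

lemma complete_partite_snoc:
  assumes "complete_partite F s t C" "finite D" "card D = t"
    and "\<forall>i<s. C i \<inter> D = {}" "\<forall>i<s. \<forall>x\<in>C i. \<forall>y\<in>D. {x,y} \<in> F"
  shows "complete_partite F (Suc s) t (C(s := D))"
  using assms unfolding complete_partite_def
  by (auto simp: less_Suc_eq) (metis insert_commute)

lemma card_Union_complete_partite:
  assumes "complete_partite F s T A"
  shows "card (\<Union>i<s. A i) = s * T"
proof -
  have "card (\<Union>i<s. A i) = (\<Sum>i<s. card (A i))"
    by (rule card_UN_disjoint) (use assms in \<open>auto simp: complete_partite_def\<close>)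
  also have "\<dots> = s * T" using assms by (simp add: complete_partite_def)
  finally show ?thesis .
qed

lemma card_neighbours_in_parts_le:
  assumes K: "complete_partite F s T A" and i0: "i0 < s" "card {w\<in>A i0. {w,v} \<in> F} < t"
  shows "card {w\<in>(\<Union>i<s. A i). {w,v} \<in> F} \<le> (s - 1) * T + t"
proof -
  have fin: "finite (A i)" "card (A i) = T" if "i < s" for i
    using K that by (auto simp: complete_partite_def)
  have "card (\<Union>i\<in>{..<s}-{i0}. A i) \<le> (\<Sum>i\<in>{..<s}-{i0}. card (A i))" by (rule card_UN_le) simp
  also have "\<dots> = (s - 1) * T" using fin i0 by simp
  finally have others: "card (\<Union>i\<in>{..<s}-{i0}. A i) \<le> (s - 1) * T" .
  have "{w\<in>(\<Union>i<s. A i). {w,v} \<in> F} \<subseteq> (\<Union>i\<in>{..<s}-{i0}. A i) \<union> {w\<in>A i0. {w,v} \<in> F}"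
    by blast
  hence "card {w\<in>(\<Union>i<s. A i). {w,v} \<in> F}
      \<le> card ((\<Union>i\<in>{..<s}-{i0}. A i) \<union> {w\<in>A i0. {w,v} \<in> F})"
    by (rule card_mono[rotated]) (use fin i0 in auto)
  also have "\<dots> \<le> card (\<Union>i\<in>{..<s}-{i0}. A i) + card {w\<in>A i0. {w,v} \<in> F}" by (rule card_Un_le)
  finally show ?thesis using others i0 by linarith
qed

(* Pigeonhole over the (T choose t)^s ways of picking t neighbours in every part. *)
lemma complete_partite_extend:
  assumes K: "complete_partite F s T A" and t: "t \<ge> 1" and "finite X"
    and X: "\<forall>i<s. A i \<inter> X = {}"
    and nbrs: "\<forall>x\<in>X. \<forall>i<s. t \<le> card {w\<in>A i. {w,x} \<in> F}"
    and big: "(t - 1) * (T choose t) ^ s < card X"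
  shows "\<exists>B. complete_partite F (Suc s) t B \<and> (\<forall>i<s. B i \<subseteq> A i) \<and> B s \<subseteq> X"
proof -
  have Afin: "finite (A i)" "card (A i) = T" if "i < s" for i
    using K that by (auto simp: complete_partite_def)
  define Y where "Y = (\<Pi>\<^sub>E i\<in>{..<s}. {S. S \<subseteq> A i \<and> card S = t})"
  have "finite Y" unfolding Y_def using Afin by (intro finite_PiE) auto
  have "card Y = (\<Prod>i<s. card {S. S \<subseteq> A i \<and> card S = t})" unfolding Y_def by (rule card_PiE) simp
  also have "\<dots> = (T choose t) ^ s" using Afin by (simp add: n_subsets)
  finally have cardY: "card Y = (T choose t) ^ s" .
  have "\<exists>S. S \<in> Y \<and> (\<forall>i<s. S i \<subseteq> {w\<in>A i. {w,x} \<in> F})" if x: "x \<in> X" for x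
  proof -
    have "\<exists>S. S \<subseteq> {w\<in>A i. {w,x} \<in> F} \<and> card S = t" if "i < s" for i
      using nbrs x that by (meson obtain_subset_with_card_n)
    then obtain S where S: "\<forall>i<s. S i \<subseteq> {w\<in>A i. {w,x} \<in> F} \<and> card (S i) = t" by metis
    show ?thesis
      by (rule exI[of _ "restrict S {..<s}"]) (use S in \<open>auto simp: Y_def\<close>)
  qed
  hence "\<forall>x\<in>X. \<exists>S. S \<in> Y \<and> (\<forall>i<s. S i \<subseteq> {w\<in>A i. {w,x} \<in> F})" by blast
  then obtain \<phi> where "\<forall>x\<in>X. \<phi> x \<in> Y \<and> (\<forall>i<s. \<phi> x i \<subseteq> {w\<in>A i. {w,x} \<in> F})"
    by (metis bchoice)
  hence \<phi>: "\<phi> \<in> X \<rightarrow> Y" "\<forall>x\<in>X. \<forall>i<s. \<phi> x i \<subseteq> {w\<in>A i. {w,x} \<in> F}"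
    by auto
  obtain g where "g \<in> Y" and "t \<le> card {x\<in>X. \<phi> x = g}"
    using exists_large_fibre[OF \<open>finite Y\<close> \<phi>(1) _ t] big cardY by auto
  then obtain D where D: "D \<subseteq> {x\<in>X. \<phi> x = g}" "card D = t" "finite D"
    by (meson obtain_subset_with_card_n)
  have g: "g i \<subseteq> A i" "card (g i) = t" if "i < s" for i
    using \<open>g \<in> Y\<close> that by (auto simp: Y_def)
  have "complete_partite F s t g" by (rule complete_partite_subsets[OF K]) (use g in blast)
  moreover have "\<forall>i<s. g i \<inter> D = {}" using g D X by blast
  moreover have "\<forall>i<s. \<forall>x\<in>g i. \<forall>y\<in>D. {x,y} \<in> F" using \<phi>(2) D by blast
  ultimately have "complete_partite F (Suc s) t (g(s := D))"
    using D by (intro complete_partite_snoc) auto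
  thus ?thesis using g D by force
qed

lemma degree_count_arith:
  fixes s T t e n u :: real
  assumes "s \<ge> 1" "e > 0" "t \<ge> 1" "2 * t / e \<le> T" "n \<ge> 0"
    and count: "s * T * ((1 - 1/s + e) * n) \<le> u * (s * T) + n * ((s - 1) * T + t)"
  shows "e * n / 2 \<le> u"
proof -
  have "0 < 2 * t / e" using assms(2,3) by simp
  hence sT: "0 < s * T" using assms(1,4) by simp
  have "s * T * ((1 - 1/s + e) * n) = (s - 1) * T * n + e * s * T * n"
    using assms(1) by (simp add: field_simps)
  moreover have "n * ((s - 1) * T + t) = (s - 1) * T * n + t * n"
    by (simp add: algebra_simps)
  ultimately have "e * s * T * n \<le> u * (s * T) + t * n"
    using count by linarith
  moreover have "t * n \<le> e * T / 2 * n"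
    using assms(2,4,5) by (intro mult_right_mono) (simp_all add: field_simps)
  moreover have "0 < T" using sT assms(1) by (simp add: zero_less_mult_iff)
  hence "e * T / 2 * n \<le> e * s * T * n / 2"
    using assms(1,2,5) by (simp add: mult_right_mono mult_left_mono)
  ultimately have "e * n / 2 * (s * T) \<le> u * (s * T)"
    by (simp add: algebra_simps)
  thus ?thesis using sT by (rule mult_right_le_imp_le)
qed

lemma card_rich_vertices:
  fixes e :: real
  assumes K: "complete_partite F s T A" "\<forall>i<s. A i \<subseteq> V" and "finite V" "s \<ge> 1" "e > 0"
    and md: "\<forall>v\<in>V. (1 - 1/s + e) * card V \<le> degree_in F V v"
    and "t \<ge> 1" and T: "2 * t / e \<le> real T"
  shows "e * card V / 2 \<le> card {v\<in>V. \<forall>i<s. t \<le> card {w\<in>A i. {w,v} \<in> F}}"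
    (is "_ \<le> real (card ?U)")
proof -
  define W where "W = (\<Union>i<s. A i)"
  define n where "n = card V"
  have WV: "W \<subseteq> V" using K unfolding W_def by blast
  have "finite W" using WV \<open>finite V\<close> finite_subset by blast
  have cardW: "card W = s * T" unfolding W_def by (rule card_Union_complete_partite[OF K(1)])
  have "real (s * T) * ((1 - 1/s + e) * n) = (\<Sum>w\<in>W. (1 - 1/s + e) * n)" using cardW by simp
  also have "\<dots> \<le> (\<Sum>w\<in>W. real (degree_in F V w))"
    by (rule sum_mono) (use md WV n_def in auto)
  finally have lower: "real (s * T) * ((1 - 1/s + e) * n) \<le> real (\<Sum>w\<in>W. degree_in F V w)"
    by simp
  have "(\<Sum>w\<in>W. degree_in F V w) = (\<Sum>v\<in>V. card {w\<in>W. {w,v} \<in> F})"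
    using sum_card_filter_swap[OF \<open>finite W\<close> \<open>finite V\<close>, of "\<lambda>w v. {v,w} \<in> F"]
    by (simp add: degree_in_def insert_commute)
  also have "\<dots> \<le> (\<Sum>v\<in>V. (if v \<in> ?U then s * T else 0) + ((s - 1) * T + t))"
  proof (rule sum_mono)
    fix v assume "v \<in> V"
    show "card {w\<in>W. {w,v} \<in> F} \<le> (if v \<in> ?U then s * T else 0) + ((s - 1) * T + t)"
    proof (cases "v \<in> ?U")
      case True
      have "card {w\<in>W. {w,v} \<in> F} \<le> card W" by (rule card_mono[OF \<open>finite W\<close>]) auto
      thus ?thesis using True cardW by simp
    next
      case False
      then obtain i0 where "i0 < s" "card {w\<in>A i0. {w,v} \<in> F} < t" using \<open>v \<in> V\<close> by force
      from card_neighbours_in_parts_le[OF K(1) this] show ?thesis unfolding W_def by simp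
    qed
  qed
  also have "\<dots> = card ?U * (s * T) + n * ((s - 1) * T + t)"
    using \<open>finite V\<close> by (simp add: sum.distrib sum.If_cases Int_def n_def)
  finally have "real (s * T) * ((1 - 1/s + e) * n) \<le> real (card ?U * (s * T) + n * ((s - 1) * T + t))"
    using lower by (meson of_nat_le_iff order_trans)
  hence "real s * T * ((1 - 1/s + e) * n) \<le> card ?U * (real s * T) + real n * ((real s - 1) * T + t)"
    using \<open>s \<ge> 1\<close> by (simp add: of_nat_diff)
  from degree_count_arith[OF _ \<open>e > 0\<close> _ T _ this] show ?thesis
    using \<open>s \<ge> 1\<close> \<open>t \<ge> 1\<close> n_def by simp
qed

lemma complete_partite_grow:
  fixes e :: real
  assumes K: "complete_partite F s T A" "\<forall>i<s. A i \<subseteq> V" and "finite V" "s \<ge> 1" "t \<ge> 1" "e > 0"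
    and md: "\<forall>v\<in>V. (1 - 1/s + e) * card V \<le> degree_in F V v"
    and T: "2 * t / e \<le> real T"
    and big: "real (s * T + (t - 1) * (T choose t) ^ s) < e * card V / 2"
  shows "\<exists>B. complete_partite F (Suc s) t B \<and> (\<forall>i<Suc s. B i \<subseteq> V)"
proof -
  define U where "U = {v\<in>V. \<forall>i<s. t \<le> card {w\<in>A i. {w,v} \<in> F}}"
  define X where "X = U - (\<Union>i<s. A i)"
  have "e * card V / 2 \<le> card U"
    unfolding U_def by (rule card_rich_vertices[OF K \<open>finite V\<close> \<open>s \<ge> 1\<close> \<open>e > 0\<close> md \<open>t \<ge> 1\<close> T])
  moreover have "card U - s * T \<le> card X"
    unfolding X_def card_Union_complete_partite[OF K(1), symmetric]
    by (rule diff_card_le_card_Diff) (use K \<open>finite V\<close> in \<open>auto intro: finite_subset\<close>)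
  ultimately have "(t - 1) * (T choose t) ^ s < card X" using big by linarith
  moreover have "finite X" using \<open>finite V\<close> by (simp add: X_def U_def)
  moreover have "\<forall>i<s. A i \<inter> X = {}" "\<forall>x\<in>X. \<forall>i<s. t \<le> card {w\<in>A i. {w,x} \<in> F}"
    unfolding X_def U_def by blast+
  ultimately obtain B where B: "complete_partite F (Suc s) t B" "\<forall>i<s. B i \<subseteq> A i" "B s \<subseteq> X"
    using complete_partite_extend[OF K(1) \<open>t \<ge> 1\<close>] by blast
  have "B i \<subseteq> V" if "i < Suc s" for i
    using that B K(2) unfolding X_def U_def less_Suc_eq by blast
  thus ?thesis using B(1) by blast
qed

definition forces_complete_partite :: "nat \<Rightarrow> real \<Rightarrow> bool" where
  "forces_complete_partite s c \<longleftrightarrow> (\<forall>t\<ge>1. \<exists>N. \<forall>F V. finite V \<longrightarrow> N \<le> card V \<longrightarrow>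
     (\<forall>v\<in>V. c * card V \<le> degree_in F V v) \<longrightarrow>
     (\<exists>B. complete_partite F s t B \<and> (\<forall>i<s. B i \<subseteq> V)))"

lemma forces_complete_partite_one: "forces_complete_partite 1 c"
  unfolding forces_complete_partite_def
proof (intro allI impI)
  fix t :: nat
  have "\<exists>B. complete_partite F 1 t B \<and> (\<forall>i<1. B i \<subseteq> V)"
    if "finite V" "t \<le> card V" for F and V :: "nat set"
  proof -
    obtain A where "A \<subseteq> V" "card A = t" "finite A"
      using \<open>t \<le> card V\<close> by (rule obtain_subset_with_card_n)
    hence "complete_partite F 1 t (\<lambda>_. A) \<and> (\<forall>i<1. A \<subseteq> V)" by (simp add: complete_partite_def)
    thus ?thesis by blast
  qed
  thus "\<exists>N. \<forall>F V. finite V \<longrightarrow> N \<le> card V \<longrightarrow> (\<forall>v\<in>V. c * card V \<le> degree_in F V v) \<longrightarrow>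
      (\<exists>B. complete_partite F 1 t B \<and> (\<forall>i<1. B i \<subseteq> V))"
    by blast
qed

lemma forces_complete_partite_mono:
  assumes "forces_complete_partite s c" "c \<le> c'"
  shows "forces_complete_partite s c'"
proof -
  have "c * card V \<le> c' * card V" for V :: "nat set"
    using \<open>c \<le> c'\<close> by (simp add: mult_right_mono)
  hence "\<forall>v\<in>V. c * card V \<le> degree_in F V v" if "\<forall>v\<in>V. c' * card V \<le> degree_in F V v"
    for F V using that order_trans by blast
  thus ?thesis using assms(1) unfolding forces_complete_partite_def by (metis (no_types, lifting))
qed

lemma forces_complete_partite_Suc:
  fixes e :: real
  assumes "s \<ge> 1" "e > 0" and forces: "forces_complete_partite s (1 - 1/s + e)"
  shows "forces_complete_partite (Suc s) (1 - 1/s + e)"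
  unfolding forces_complete_partite_def
proof (intro allI impI)
  fix t :: nat assume "t \<ge> 1"
  define T where "T = nat \<lceil>2 * real t / e\<rceil>"
  have T: "2 * real t / e \<le> real T" unfolding T_def by linarith
  moreover have "0 < 2 * real t / e" using \<open>t \<ge> 1\<close> \<open>e > 0\<close> by simp
  ultimately have "T \<ge> 1" by linarith
  then obtain N1 where N1: "\<forall>F V. finite V \<longrightarrow> N1 \<le> card V \<longrightarrow>
      (\<forall>v\<in>V. (1 - 1/s + e) * card V \<le> degree_in F V v) \<longrightarrow>
      (\<exists>B. complete_partite F s T B \<and> (\<forall>i<s. B i \<subseteq> V))"
    using forces unfolding forces_complete_partite_def by blast
  obtain N0 :: nat where N0: "2 * real (s * T + (t - 1) * (T choose t) ^ s) / e < N0"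
    using reals_Archimedean2 by blast
  show "\<exists>N. \<forall>F V. finite V \<longrightarrow> N \<le> card V \<longrightarrow>
      (\<forall>v\<in>V. (1 - 1/s + e) * card V \<le> degree_in F V v) \<longrightarrow>
      (\<exists>B. complete_partite F (Suc s) t B \<and> (\<forall>i<Suc s. B i \<subseteq> V))"
  proof (intro exI[of _ "max N0 N1"] allI impI)
    fix F V assume "finite V" and V: "max N0 N1 \<le> card V"
      and md: "\<forall>v\<in>V. (1 - 1/s + e) * card V \<le> degree_in F V v"
    have "N1 \<le> card V" using V by simp
    then obtain A where A: "complete_partite F s T A" "\<forall>i<s. A i \<subseteq> V"
      using N1 \<open>finite V\<close> md by blast
    have "real N0 \<le> card V" using V by simp
    hence "2 * real (s * T + (t - 1) * (T choose t) ^ s) / e < card V" using N0 by linarith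
    hence "real (s * T + (t - 1) * (T choose t) ^ s) < e * card V / 2"
      using \<open>e > 0\<close> by (simp add: field_simps)
    from complete_partite_grow[OF A \<open>finite V\<close> \<open>s \<ge> 1\<close> \<open>t \<ge> 1\<close> \<open>e > 0\<close> md T this]
    show "\<exists>B. complete_partite F (Suc s) t B \<and> (\<forall>i<Suc s. B i \<subseteq> V)" .
  qed
qed

lemma forces_complete_partite_min_degree:
  fixes e :: real
  assumes "s \<ge> 1" "e > 0"
  shows "forces_complete_partite (Suc s) (1 - 1/s + e)"
  using assms(1)
proof (induction s rule: nat_induct_at_least)
  case base
  show ?case
    using forces_complete_partite_Suc[OF _ \<open>e > 0\<close> forces_complete_partite_one] by simp
next
  case (Suc s)
  have "1 - 1/s + e \<le> 1 - 1/Suc s + e" using Suc.hyps by (simp add: frac_le)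
  with Suc.IH have "forces_complete_partite (Suc s) (1 - 1/Suc s + e)"
    by (rule forces_complete_partite_mono)
  from forces_complete_partite_Suc[OF _ \<open>e > 0\<close> this] show ?case by simp
qed

lemma card_edges_within_le_remove:
  assumes "finite U" "\<forall>e\<in>F. card e = 2" "v \<in> U"
  shows "card {e\<in>F. e \<subseteq> U} \<le> card {e\<in>F. e \<subseteq> U - {v}} + degree_in F U v"
proof -
  define N where "N = (\<lambda>u. {u,v}) ` {u\<in>U. {u,v} \<in> F}"
  have "{e\<in>F. e \<subseteq> U} \<subseteq> {e\<in>F. e \<subseteq> U - {v}} \<union> N"
  proof
    fix e assume e: "e \<in> {e\<in>F. e \<subseteq> U}"
    show "e \<in> {e\<in>F. e \<subseteq> U - {v}} \<union> N"
    proof (cases "v \<in> e")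
      case True
      moreover have "card e = 2" using e assms(2) by blast
      ultimately obtain u where "e = {v,u}" by (metis card_2_obtain_other)
      hence "e = {u,v}" by (simp add: insert_commute)
      moreover have "{u,v} \<in> F" "u \<in> U" using e \<open>e = {u,v}\<close> by auto
      ultimately show ?thesis unfolding N_def by blast
    qed (use e in blast)
  qed
  moreover have "{e\<in>F. e \<subseteq> U - {v}} \<subseteq> Pow U" by blast
  hence "finite {e\<in>F. e \<subseteq> U - {v}}" using \<open>finite U\<close> by (meson finite_Pow_iff finite_subset)
  moreover have "finite N" unfolding N_def using \<open>finite U\<close> by simp
  ultimately have "card {e\<in>F. e \<subseteq> U} \<le> card ({e\<in>F. e \<subseteq> U - {v}} \<union> N)"
    by (intro card_mono finite_UnI)
  also have "\<dots> \<le> card {e\<in>F. e \<subseteq> U - {v}} + card N" by (rule card_Un_le)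
  also have "card N \<le> degree_in F U v"
    unfolding N_def degree_in_def by (rule card_image_le) (use \<open>finite U\<close> in simp)
  finally show ?thesis by simp
qed

(* Deleting a vertex of degree below c |U| loses fewer edges than the threshold drops. *)
lemma exists_dense_min_degree_subset:
  fixes c D :: real
  assumes "finite U" "\<forall>e\<in>F. card e = 2" "real (card {e\<in>F. e \<subseteq> U}) > c * card U * (card U + 1)/2 + D"
  shows "\<exists>U'\<subseteq>U. (\<forall>v\<in>U'. real (degree_in F U' v) \<ge> c * card U') \<and>
           real (card {e\<in>F. e\<subseteq>U'}) > c * card U' * (card U' + 1)/2 + D"
  using assms
proof (induction "card U" arbitrary: U rule: less_induct)
  case less
  show ?case
  proof (cases "\<forall>v\<in>U. real (degree_in F U v) \<ge> c * card U")
    case True thus ?thesis using less.prems by blast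
  next
    case False
    then obtain v where v: "v \<in> U" "real (degree_in F U v) < c * card U" by force
    define m where "m = card U"
    have m1: "m \<ge> 1" using v less.prems(1) m_def by (metis One_nat_def Suc_leI card_gt_0_iff empty_iff)
    have cU1: "card (U - {v}) = m - 1" using v less.prems(1) m_def by simp
    have split: "card {e\<in>F. e \<subseteq> U} \<le> card {e\<in>F. e \<subseteq> U - {v}} + degree_in F U v"
      by (rule card_edges_within_le_remove[OF less.prems(1,2) v(1)])
    have ineq: "real (card {e\<in>F. e \<subseteq> U - {v}}) > c * card (U - {v}) * (card (U - {v}) + 1)/2 + D"
    proof -
      have r: "real (card (U - {v})) = real m - 1" using cU1 m1 by (simp add: of_nat_diff)
      have "c * (real m - 1) * (real m - 1 + 1)/2 + D = c * m * (m + 1)/2 + D - c * m"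
        by (simp add: field_simps)
      also have "\<dots> < real (card {e\<in>F. e \<subseteq> U}) - real (degree_in F U v)"
        using less.prems(3) v(2) m_def by simp
      also have "\<dots> \<le> real (card {e\<in>F. e \<subseteq> U - {v}})" using split by linarith
      finally show ?thesis using r by simp
    qed
    have lt: "card (U - {v}) < card U" using v less.prems(1) by (meson card_Diff1_less)
    have fin': "finite (U - {v})" using less.prems(1) by simp
    have "\<exists>U'\<subseteq>U - {v}. (\<forall>w\<in>U'. real (degree_in F U' w) \<ge> c * card U') \<and>
           real (card {e\<in>F. e\<subseteq>U'}) > c * card U' * (card U' + 1)/2 + D"
      by (rule less.hyps[OF lt fin' less.prems(2) ineq])
    thus ?thesis by blast
  qed
qed

lemma card_edges_within_le:
  assumes "finite U" "\<forall>e\<in>F. card e = 2"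
  shows "real (card {e\<in>F. e \<subseteq> U}) \<le> real (card U) ^ 2 / 2"
proof -
  have "card {e\<in>F. e \<subseteq> U} \<le> card {e. e \<subseteq> U \<and> card e = 2}"
    by (rule card_mono) (use assms in auto)
  also have "\<dots> = card U choose 2" by (rule n_subsets[OF \<open>finite U\<close>])
  finally have "real (card {e\<in>F. e \<subseteq> U}) \<le> real (card U) * (real (card U) - 1) / 2"
    using real_choose_two by (metis of_nat_le_iff)
  also have "\<dots> \<le> real (card U) ^ 2 / 2" by (simp add: power2_eq_square algebra_simps)
  finally show ?thesis .
qed

lemma density_gap:
  fixes c' d n :: real
  assumes "0 \<le> c'" "c' \<le> 1" "d > 0" "n > 16/(3*d) + 4"
  shows "(c' + d) * (n * (n - 1) / 2) > (c' + d/2) * n * (n + 1)/2 + d * n^2/16"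
proof -
  have "0 < 16/(3*d)" using assms(3) by simp
  hence n0: "n > 0" using assms(4) by linarith
  have "3*d*n/16 > 1 + 3*d/4"
  proof -
    have "n * (3*d) > (16/(3*d) + 4) * (3*d)" using assms(3,4) by (simp add: mult_strict_right_mono)
    also have "(16/(3*d) + 4) * (3*d) = 16 + 12*d" using assms(3) by (simp add: field_simps)
    finally show ?thesis by (simp add: algebra_simps)
  qed
  hence "n * (3*d*n/16 - c' - 3*d/4) > 0" using n0 assms(2) by (intro mult_pos_pos) auto
  moreover have "(c' + d) * (n * (n - 1) / 2) - ((c' + d/2) * n * (n + 1)/2 + d * n^2/16)
     = n * (3*d*n/16 - c' - 3*d/4)" by (simp add: field_simps power2_eq_square)
  ultimately show ?thesis by linarith
qed

definition complete_graph :: "nat \<Rightarrow> nat set set" where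
  "complete_graph n = {e. e \<subseteq> {..<n} \<and> card e = 2}"

lemma graph_complete_graph: "graph (complete_graph n)"
  unfolding graph_def complete_graph_def by (auto intro: finite_subset[of _ "Pow {..<n}"])

lemma card_complete_graph: "card (complete_graph n) = n choose 2"
  unfolding complete_graph_def using n_subsets[of "{..<n}" 2] by simp

lemma square_le_of_less_div:
  fixes d x :: real
  assumes "d > 0" "8 * x ^ 2 / d < real n"
  shows "x ^ 2 \<le> d * real n ^ 2 / 8"
proof -
  have "x ^ 2 \<le> d * n / 8" using assms by (simp add: field_simps)
  moreover have "0 \<le> 8 * x ^ 2 / d" using \<open>d > 0\<close> by simp
  hence "0 < real n" using assms(2) by linarith
  hence "1 \<le> real n" by simp
  hence "d * n / 8 * 1 \<le> d * n / 8 * n" using \<open>d > 0\<close> by (intro mult_left_mono) auto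
  ultimately show ?thesis by (simp add: power2_eq_square)
qed

lemma dense_graph_min_degree_subset:
  fixes c d :: real
  assumes "0 \<le> c" "c \<le> 1" "d > 0"
  shows "\<exists>N. \<forall>n\<ge>N. \<forall>F\<subseteq>complete_graph n. (c + d) * (n choose 2) \<le> card F \<longrightarrow>
    (\<exists>U. finite U \<and> M \<le> card U \<and> (\<forall>v\<in>U. (c + d/2) * card U \<le> degree_in F U v))"
proof -
  obtain N1 :: nat where N1: "16/(3*d) + 4 < N1" using reals_Archimedean2 by blast
  obtain N2 :: nat where N2: "8 * real M ^ 2 / d < N2" using reals_Archimedean2 by blast
  show ?thesis
  proof (intro exI[of _ "max N1 N2"] allI impI)
    fix n F assume n: "max N1 N2 \<le> n" and "F \<subseteq> complete_graph n"
      and dense: "(c + d) * (n choose 2) \<le> card F"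
    define D where "D = d * real n ^ 2 / 16"
    have F2: "\<forall>e\<in>F. card e = 2" and F: "{e\<in>F. e \<subseteq> {..<n}} = F"
      using \<open>F \<subseteq> complete_graph n\<close> unfolding complete_graph_def by auto
    have "16/(3*d) + 4 < real n" using N1 n by linarith
    hence "(c + d/2) * real n * (real n + 1)/2 + D < (c + d) * (real n * (real n - 1) / 2)"
      unfolding D_def using assms by (intro density_gap)
    also have "\<dots> \<le> card {e\<in>F. e \<subseteq> {..<n}}" using dense F by (simp add: real_choose_two)
    finally have "(c + d/2) * card {..<n} * (card {..<n} + 1)/2 + D < card {e\<in>F. e \<subseteq> {..<n}}"
      by (simp add: add.commute)
    from exists_dense_min_degree_subset[OF finite_lessThan F2 this]
    obtain U where U: "U \<subseteq> {..<n}" "\<forall>v\<in>U. (c + d/2) * card U \<le> degree_in F U v"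
      "(c + d/2) * card U * (card U + 1)/2 + D < card {e\<in>F. e\<subseteq>U}"
      by blast
    have "finite U" using U(1) finite_subset by blast
    have "0 \<le> (c + d/2) * card U * (card U + 1)/2" using assms by simp
    hence "D < real (card U) ^ 2 / 2"
      using U(3) card_edges_within_le[OF \<open>finite U\<close> F2] by linarith
    moreover have "8 * real M ^ 2 / d < real n" using N2 n by linarith
    hence "real M ^ 2 \<le> 2 * D" using square_le_of_less_div[OF \<open>d > 0\<close>] unfolding D_def by simp
    ultimately have "real M ^ 2 < real (card U) ^ 2" by linarith
    hence "real M < card U" by (rule power_less_imp_less_base) simp
    thus "\<exists>U. finite U \<and> M \<le> card U \<and> (\<forall>v\<in>U. (c + d/2) * card U \<le> degree_in F U v)"
      using \<open>finite U\<close> U(2) by auto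
  qed
qed

lemma erdos_stone:
  fixes d :: real
  assumes "r \<ge> 1" "d > 0" "t \<ge> 1"
  shows "\<exists>N. \<forall>n\<ge>N. \<forall>F\<subseteq>complete_graph n. (1 - 1/r + d) * (n choose 2) \<le> card F \<longrightarrow>
    (\<exists>B. complete_partite F (Suc r) t B)"
proof -
  obtain M where M: "\<forall>F V. finite V \<longrightarrow> M \<le> card V \<longrightarrow>
     (\<forall>v\<in>V. (1 - 1/r + d/2) * card V \<le> degree_in F V v) \<longrightarrow>
     (\<exists>B. complete_partite F (Suc r) t B \<and> (\<forall>i<Suc r. B i \<subseteq> V))"
    using forces_complete_partite_min_degree[OF \<open>r \<ge> 1\<close>, of "d/2"] \<open>d > 0\<close> \<open>t \<ge> 1\<close>
    unfolding forces_complete_partite_def by auto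
  have "0 \<le> 1 - 1/real r" "1 - 1/real r \<le> 1" using \<open>r \<ge> 1\<close> by simp_all
  from dense_graph_min_degree_subset[OF this \<open>d > 0\<close>, of M] obtain N where
    "\<forall>n\<ge>N. \<forall>F\<subseteq>complete_graph n. (1 - 1/r + d) * (n choose 2) \<le> card F \<longrightarrow>
      (\<exists>U. finite U \<and> M \<le> card U \<and> (\<forall>v\<in>U. (1 - 1/r + d/2) * card U \<le> degree_in F U v))"
    by blast
  thus ?thesis using M by meson
qed

lemma finite_vertices: "graph H \<Longrightarrow> finite (vertices H)"
  unfolding graph_def vertices_def by (metis card.infinite finite_Union zero_neq_numeral)

lemma proper_colouring_chromatic_number:
  assumes "graph H"
  shows "\<exists>c. proper_colouring H c (chromatic_number H)"
proof -
  obtain k where "vertices H \<subseteq> {..<k}" using finite_nat_bounded[OF finite_vertices[OF assms]] by blast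
  hence "proper_colouring H id k" unfolding proper_colouring_def by (simp add: subset_iff)
  thus ?thesis unfolding chromatic_number_def by (rule LeastI[where P="\<lambda>k. \<exists>c. proper_colouring H c k", OF exI])
qed

lemma complete_partite_embedding:
  assumes K: "complete_partite F s t B" and "finite V" "card V \<le> t" and c: "\<forall>v\<in>V. c v < s"
  shows "\<exists>f. inj_on f V \<and> (\<forall>v\<in>V. f v \<in> B (c v))"
proof -
  define C where "C i = {v\<in>V. c v = i}" for i
  have "\<exists>g. inj_on g (C i) \<and> g ` C i \<subseteq> B i" if "i < s" for i
  proof -
    have "card (C i) \<le> card V" unfolding C_def by (rule card_mono[OF \<open>finite V\<close>]) auto
    also have "\<dots> \<le> card (B i)" using \<open>card V \<le> t\<close> K that by (simp add: complete_partite_def)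
    finally have "card (C i) \<le> card (B i)" .
    moreover have "finite (C i)" "finite (B i)"
      using \<open>finite V\<close> K that unfolding C_def complete_partite_def by auto
    ultimately show ?thesis by (meson card_le_inj)
  qed
  then obtain g where g: "\<forall>i<s. inj_on (g i) (C i) \<and> g i ` C i \<subseteq> B i" by metis
  define f where "f v = g (c v) v" for v
  have fB: "f v \<in> B (c v)" if "v \<in> V" for v
    using g c that unfolding f_def C_def by blast
  have "inj_on f V"
  proof (rule inj_onI)
    fix u v assume u: "u \<in> V" and v: "v \<in> V" and "f u = f v"
    show "u = v"
    proof (cases "c u = c v")
      case True
      hence "u \<in> C (c u)" "v \<in> C (c u)" unfolding C_def using u v by auto
      moreover have "inj_on (g (c u)) (C (c u))" using g c u by blast
      ultimately show ?thesis using \<open>f u = f v\<close> True unfolding f_def by (simp add: inj_on_eq_iff)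
    next
      case False
      moreover have "c u < s" "c v < s" using c u v by auto
      moreover have "\<forall>i<s. \<forall>j<s. i \<noteq> j \<longrightarrow> B i \<inter> B j = {}"
        using K unfolding complete_partite_def by blast
      ultimately have "B (c u) \<inter> B (c v) = {}" by simp
      thus ?thesis using fB[OF u] fB[OF v] \<open>f u = f v\<close> by auto
    qed
  qed
  thus ?thesis using fB by blast
qed

lemma subgraph_of_complete_partite:
  assumes H: "graph H" "proper_colouring H c s" and K: "complete_partite F s t B"
    and "card (vertices H) \<le> t"
  shows "subgraph_of H F"
proof -
  have c: "\<forall>v\<in>vertices H. c v < s" using H(2) unfolding proper_colouring_def by blast
  obtain f where f: "inj_on f (vertices H)" "\<forall>v\<in>vertices H. f v \<in> B (c v)"
    using complete_partite_embedding[OF K finite_vertices[OF H(1)] \<open>card (vertices H) \<le> t\<close> c]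
    by blast
  have "f ` e \<in> F" if "e \<in> H" for e
  proof -
    have "card e = 2" using H(1) \<open>e \<in> H\<close> unfolding graph_def by blast
    then obtain x y where xy: "e = {x,y}" "x \<noteq> y" by (auto simp: card_2_iff)
    hence "x \<in> vertices H" "y \<in> vertices H" using \<open>e \<in> H\<close> unfolding vertices_def by auto
    moreover have "c x \<noteq> c y" using H(2) \<open>e \<in> H\<close> xy unfolding proper_colouring_def by blast
    moreover have "\<forall>i<s. \<forall>j<s. i \<noteq> j \<longrightarrow> (\<forall>x\<in>B i. \<forall>y\<in>B j. {x,y} \<in> F)"
      using K by (simp add: complete_partite_def)
    ultimately have "{f x, f y} \<in> F" using f(2) c by blast
    thus ?thesis using xy by simp
  qed
  thus ?thesis using f(1) unfolding subgraph_of_def by blast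
qed

lemma free_of_proper_colouring:
  assumes pc: "proper_colouring F c r" and Hs: "\<forall>H\<in>Hs. r < chromatic_number H"
  shows "free_of Hs F"
  unfolding free_of_def
proof (intro ballI notI)
  fix H assume H: "H \<in> Hs" and "subgraph_of H F"
  then obtain f where f: "inj_on f (vertices H)" "\<forall>e\<in>H. f ` e \<in> F" unfolding subgraph_of_def by blast
  have "proper_colouring H (c \<circ> f) r"
    unfolding proper_colouring_def
  proof (intro conjI ballI impI)
    fix v assume "v \<in> vertices H"
    then obtain e where e: "e \<in> H" "v \<in> e" unfolding vertices_def by blast
    hence "f v \<in> vertices F" using f(2) unfolding vertices_def by blast
    thus "(c \<circ> f) v < r" using pc unfolding proper_colouring_def by simp
  next
    fix e u v assume e: "e \<in> H" and u: "u \<in> e" and v: "v \<in> e" and uv: "u \<noteq> v"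
    have "u \<in> vertices H" "v \<in> vertices H" using e u v unfolding vertices_def by auto
    hence "f u \<noteq> f v" using f(1) uv by (meson inj_onD)
    moreover have "f u \<in> f ` e" "f v \<in> f ` e" using u v by auto
    ultimately show "(c \<circ> f) u \<noteq> (c \<circ> f) v" using pc f(2) e unfolding proper_colouring_def by auto
  qed
  hence "chromatic_number H \<le> r" unfolding chromatic_number_def by (intro Least_le) blast
  thus False using Hs H by fastforce
qed

definition monochromatic :: "(nat \<Rightarrow> nat) \<Rightarrow> nat set \<Rightarrow> bool" where
  "monochromatic c e \<longleftrightarrow> (\<forall>u\<in>e. \<forall>w\<in>e. c u = c w)"

lemma monochromatic_doubleton: "monochromatic c {x,y} \<longleftrightarrow> c x = c y"
  unfolding monochromatic_def by auto

lemma card_recolourings_monochromatic: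
  assumes "c u < r" "u \<noteq> v"
  shows "card {j\<in>{..<r}. monochromatic (c(v := j)) {v,u}} = 1"
proof -
  have "{j\<in>{..<r}. monochromatic (c(v := j)) {v,u}} = {c u}"
    using assms by (auto simp: monochromatic_doubleton)
  thus ?thesis by simp
qed

(* Recolour v with each of the r colours: every edge at v is monochromatic for exactly one. *)
lemma card_monochromatic_at_vertex_le:
  assumes G: "graph G" and c: "\<forall>u\<in>vertices G. c u < r"
    and min: "\<forall>c'. (\<forall>u\<in>vertices G. c' u < r) \<longrightarrow>
      card {e\<in>G. monochromatic c e} \<le> card {e\<in>G. monochromatic c' e}"
    and "v \<in> vertices G"
  shows "r * card {e\<in>G. v \<in> e \<and> monochromatic c e} \<le> card {e\<in>G. v \<in> e}"
proof -
  have "finite G" using G unfolding graph_def by blast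
  define Gv where "Gv = {e\<in>G. v \<in> e}"
  have "finite Gv" unfolding Gv_def using \<open>finite G\<close> by simp
  have split: "card {e\<in>G. monochromatic c' e}
      = card {e\<in>G. v \<notin> e \<and> monochromatic c' e} + card {e\<in>Gv. monochromatic c' e}" for c'
  proof -
    have "{e\<in>G. monochromatic c' e} = {e\<in>G. v \<notin> e \<and> monochromatic c' e} \<union> {e\<in>Gv. monochromatic c' e}"
      unfolding Gv_def by blast
    thus ?thesis using \<open>finite G\<close> \<open>finite Gv\<close> by (simp add: card_Un_disjoint Gv_def disjoint_iff)
  qed
  have recolour: "card {e\<in>Gv. monochromatic c e} \<le> card {e\<in>Gv. monochromatic (c(v := j)) e}"
    if "j < r" for j
  proof -
    have "card {e\<in>G. monochromatic c e} \<le> card {e\<in>G. monochromatic (c(v := j)) e}"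
      using min c that by simp
    moreover have "monochromatic (c(v := j)) e = monochromatic c e" if "v \<notin> e" for e
      unfolding monochromatic_def using that by (metis fun_upd_other)
    hence "{e\<in>G. v \<notin> e \<and> monochromatic (c(v := j)) e} = {e\<in>G. v \<notin> e \<and> monochromatic c e}"
      by blast
    ultimately show ?thesis using split[of c] split[of "c(v := j)"] by simp
  qed
  have one_colour: "card {j\<in>{..<r}. monochromatic (c(v := j)) e} = 1" if "e \<in> Gv" for e
  proof -
    have "card e = 2" "v \<in> e" using that G unfolding Gv_def graph_def by auto
    then obtain u where u: "e = {v,u}" "u \<noteq> v" by (rule card_2_obtain_other)
    have "u \<in> vertices G" using that u unfolding Gv_def vertices_def by blast
    thus ?thesis using card_recolourings_monochromatic u c by simp
  qed
  have "r * card {e\<in>Gv. monochromatic c e} = (\<Sum>j<r. card {e\<in>Gv. monochromatic c e})" by simp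
  also have "\<dots> \<le> (\<Sum>j<r. card {e\<in>Gv. monochromatic (c(v := j)) e})"
    by (rule sum_mono) (simp add: recolour)
  also have "\<dots> = (\<Sum>e\<in>Gv. card {j\<in>{..<r}. monochromatic (c(v := j)) e})"
    by (rule sum_card_filter_swap) (simp_all add: \<open>finite Gv\<close>)
  also have "\<dots> = card Gv" using one_colour by simp
  finally have "r * card {e\<in>Gv. monochromatic c e} \<le> card Gv" .
  moreover have "{e\<in>Gv. monochromatic c e} = {e\<in>G. v \<in> e \<and> monochromatic c e}"
    unfolding Gv_def by blast
  ultimately show ?thesis unfolding Gv_def by simp
qed

lemma sum_card_incident:
  assumes "graph G" "S \<subseteq> G"
  shows "(\<Sum>v\<in>vertices G. card {e\<in>S. v \<in> e}) = 2 * card S"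
proof -
  have "finite S" using assms unfolding graph_def by (meson finite_subset)
  have "(\<Sum>v\<in>vertices G. card {e\<in>S. v \<in> e}) = (\<Sum>e\<in>S. card {v\<in>vertices G. v \<in> e})"
    by (rule sum_card_filter_swap[OF finite_vertices[OF assms(1)] \<open>finite S\<close>])
  also have "\<dots> = (\<Sum>e\<in>S. 2)"
  proof (rule sum.cong)
    fix e assume "e \<in> S"
    hence "{v\<in>vertices G. v \<in> e} = e" "card e = 2"
      using assms unfolding graph_def vertices_def by auto
    thus "card {v\<in>vertices G. v \<in> e} = 2" by simp
  qed simp
  finally show ?thesis by simp
qed

lemma exists_colouring_few_monochromatic:
  assumes G: "graph G" and "r \<ge> 1"
  shows "\<exists>c. (\<forall>v\<in>vertices G. c v < r) \<and> r * card {e\<in>G. monochromatic c e} \<le> card G"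
proof -
  define P where "P c \<longleftrightarrow> (\<forall>v\<in>vertices G. c v < r)" for c :: "nat \<Rightarrow> nat"
  have "P (\<lambda>_. 0)" unfolding P_def using \<open>r \<ge> 1\<close> by simp
  then obtain c where "P c"
    and min: "\<forall>c'. P c' \<longrightarrow> card {e\<in>G. monochromatic c e} \<le> card {e\<in>G. monochromatic c' e}"
    using ex_has_least_nat[of P "\<lambda>_. 0" "\<lambda>c. card {e\<in>G. monochromatic c e}"] by blast
  define M where "M = {e\<in>G. monochromatic c e}"
  have "r * (2 * card M) = r * (\<Sum>v\<in>vertices G. card {e\<in>M. v \<in> e})"
    using sum_card_incident[OF G, of M] by (simp add: M_def)
  also have "\<dots> = (\<Sum>v\<in>vertices G. r * card {e\<in>G. v \<in> e \<and> monochromatic c e})"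
  proof -
    have "{e\<in>M. v \<in> e} = {e\<in>G. v \<in> e \<and> monochromatic c e}" for v unfolding M_def by blast
    thus ?thesis by (simp only: sum_distrib_left)
  qed
  also have "\<dots> \<le> (\<Sum>v\<in>vertices G. card {e\<in>G. v \<in> e})"
    using card_monochromatic_at_vertex_le[OF G] \<open>P c\<close> min unfolding P_def by (intro sum_mono) blast
  also have "\<dots> = 2 * card G" by (simp add: sum_card_incident[OF G])
  finally have "r * card M \<le> card G" by simp
  thus ?thesis using \<open>P c\<close> unfolding P_def M_def by auto
qed

lemma chromatic_number_empty: "chromatic_number {} = 0"
proof -
  have "proper_colouring {} id 0" unfolding proper_colouring_def vertices_def by simp
  thus ?thesis unfolding chromatic_number_def by (metis (mono_tags, lifting) Least_eq_0)
qed

lemma free_of_empty: "\<forall>H\<in>Hs. H \<noteq> {} \<Longrightarrow> free_of Hs {}"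
  unfolding free_of_def subgraph_of_def by blast

lemma finite_free_subgraph_sizes: "graph G \<Longrightarrow> finite {card F | F. F \<subseteq> G \<and> free_of Hs F}"
proof -
  assume "graph G"
  hence "finite G" unfolding graph_def by blast
  hence "finite {F. F \<subseteq> G \<and> free_of Hs F}" by simp
  moreover have "{card F | F. F \<subseteq> G \<and> free_of Hs F} = card ` {F. F \<subseteq> G \<and> free_of Hs F}" by blast
  ultimately show ?thesis by simp
qed

lemma card_le_ex: "graph G \<Longrightarrow> F \<subseteq> G \<Longrightarrow> free_of Hs F \<Longrightarrow> card F \<le> ex G Hs"
  unfolding ex_def by (rule Max_ge[OF finite_free_subgraph_sizes]) auto

lemma ex_less:
  assumes "graph G" "free_of Hs {}" "\<forall>F. F \<subseteq> G \<longrightarrow> free_of Hs F \<longrightarrow> card F < k"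
  shows "ex G Hs < k"
proof -
  have ne: "{card F | F. F \<subseteq> G \<and> free_of Hs F} \<noteq> {}" using assms(2) by blast
  have "\<forall>a\<in>{card F | F. F \<subseteq> G \<and> free_of Hs F}. a < k" using assms(3) by blast
  thus ?thesis unfolding ex_def using Max_less_iff[OF finite_free_subgraph_sizes[OF assms(1)] ne] by blast
qed

lemma ex_ge_fraction:
  assumes G: "graph G" and "r \<ge> 1" and Hs: "\<forall>H\<in>Hs. r < chromatic_number H"
  shows "(1 - 1/r) * card G \<le> ex G Hs"
proof -
  obtain c where c: "\<forall>v\<in>vertices G. c v < r" "r * card {e\<in>G. monochromatic c e} \<le> card G"
    using exists_colouring_few_monochromatic[OF G \<open>r \<ge> 1\<close>] by blast
  define F where "F = {e\<in>G. \<not> monochromatic c e}"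
  have "proper_colouring F c r" unfolding proper_colouring_def
  proof (intro conjI ballI impI)
    fix v assume "v \<in> vertices F"
    thus "c v < r" using c unfolding vertices_def F_def by blast
  next
    fix e u w assume e: "e \<in> F" and "u \<in> e" "w \<in> e" "u \<noteq> w"
    have "card e = 2" using e G unfolding F_def graph_def by blast
    hence "e = {u,w}" using \<open>u \<in> e\<close> \<open>w \<in> e\<close> \<open>u \<noteq> w\<close> by (auto simp: card_2_iff)
    thus "c u \<noteq> c w" using e unfolding F_def by (simp add: monochromatic_doubleton)
  qed
  hence "free_of Hs F" by (rule free_of_proper_colouring[OF _ Hs])
  hence "card F \<le> ex G Hs" by (rule card_le_ex[OF G, rotated]) (simp add: F_def)
  hence "real (card F) \<le> ex G Hs" by simp
  moreover have "card G = card F + card {e\<in>G. monochromatic c e}"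
  proof -
    have "finite G" using G unfolding graph_def by blast
    have "G = F \<union> {e\<in>G. monochromatic c e}" unfolding F_def by blast
    moreover have "F \<inter> {e\<in>G. monochromatic c e} = {}" unfolding F_def by blast
    ultimately show ?thesis using \<open>finite G\<close> by (metis card_Un_disjoint finite_Un)
  qed
  moreover have "real (card {e\<in>G. monochromatic c e}) \<le> card G / r"
    using c(2) \<open>r \<ge> 1\<close> by (simp add: field_simps flip: of_nat_mult)
  moreover have "(1 - 1/r) * real (card G) = card G - card G / r" by (simp add: algebra_simps)
  ultimately show ?thesis by linarith
qed

lemma E_fun_le:
  assumes "r \<ge> 2" "\<forall>H\<in>Hs. r < chromatic_number H"
  shows "E_fun Hs k \<le> ereal (real r / (real r - 1) * k)"
  unfolding E_fun_def
proof (rule Sup_least)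
  fix x assume "x \<in> {ereal (card G) | G. graph G \<and> ex G Hs < k}"
  then obtain G where G: "x = ereal (card G)" "graph G" "ex G Hs < k" by blast
  have "(1 - 1/r) * card G \<le> k"
    using ex_ge_fraction[OF G(2) _ assms(2)] assms(1) G(3) by fastforce
  hence "card G \<le> real r / (real r - 1) * k" using assms(1) by (simp add: field_simps)
  thus "x \<le> ereal (real r / (real r - 1) * k)" using G(1) by simp
qed

lemma card_le_E_fun:
  assumes "graph G" "free_of Hs {}" "\<forall>F\<subseteq>G. free_of Hs F \<longrightarrow> card F < k"
  shows "ereal (card G) \<le> E_fun Hs k"
  unfolding E_fun_def by (rule Sup_upper) (use ex_less[OF assms(1,2)] assms in blast)

lemma choose_le_E_fun:
  fixes \<beta> :: real
  assumes H: "H \<in> Hs" "graph H" "proper_colouring H c (Suc r)" and "r \<ge> 1" "free_of Hs {}"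
    and "1 - 1/r < \<beta>"
  shows "\<exists>N. \<forall>n\<ge>N. \<forall>k. \<beta> * (n choose 2) + 1 \<le> real k \<longrightarrow> ereal (n choose 2) \<le> E_fun Hs k"
proof -
  obtain N where N: "\<forall>n\<ge>N. \<forall>F\<subseteq>complete_graph n. \<beta> * (n choose 2) \<le> card F \<longrightarrow>
      (\<exists>B. complete_partite F (Suc r) (Suc (card (vertices H))) B)"
    using erdos_stone[OF \<open>r \<ge> 1\<close>, of "\<beta> - (1 - 1/r)" "Suc (card (vertices H))"] assms(6) by auto
  have "ereal (n choose 2) \<le> E_fun Hs k" if "N \<le> n" "\<beta> * (n choose 2) + 1 \<le> real k" for n k
  proof -
    have "card F < k" if F: "F \<subseteq> complete_graph n" "free_of Hs F" for F
    proof (rule ccontr)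
      assume "\<not> card F < k"
      with N \<open>N \<le> n\<close> \<open>\<beta> * (n choose 2) + 1 \<le> real k\<close> F(1)
      obtain B where "complete_partite F (Suc r) (Suc (card (vertices H))) B" by fastforce
      hence "subgraph_of H F" using subgraph_of_complete_partite H(2,3) by fastforce
      thus False using F(2) H(1) unfolding free_of_def by blast
    qed
    thus ?thesis
      using card_le_E_fun[OF graph_complete_graph \<open>free_of Hs {}\<close>] by (simp add: card_complete_graph)
  qed
  thus ?thesis by blast
qed

(* With n = floor (sqrt (2 (k - 1) / beta)) the bound applies, and C(n,2) >= (k - 1)/beta - O(sqrt k). *)
lemma eventually_less_of_choose_bound:
  fixes E :: "nat \<Rightarrow> real" and a \<beta> :: real
  assumes "\<beta> > 0" "a * \<beta> < 1"
    and bound: "\<forall>n\<ge>N. \<forall>k. \<beta> * (n choose 2) + 1 \<le> real k \<longrightarrow> real (n choose 2) \<le> E k"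
  shows "eventually (\<lambda>k. a * k < E k) sequentially"
proof -
  define \<gamma> where "\<gamma> = 1/\<beta> - a"
  have "\<gamma> > 0" using assms(1,2) by (simp add: \<gamma>_def field_simps)
  define s where "s k = sqrt (2 * (real k - 1) / \<beta>)" for k :: nat
  have "eventually (\<lambda>k. real N + 2 \<le> sqrt (2 * (real k - 1) / \<beta>)) sequentially"
    using \<open>\<beta> > 0\<close> by real_asymp
  moreover have "eventually (\<lambda>k. 0 < \<gamma> * k - 1/\<beta> - 3/2 * sqrt (2 * (real k - 1) / \<beta>) + 1) sequentially"
    using \<open>\<beta> > 0\<close> \<open>\<gamma> > 0\<close> by real_asymp
  ultimately show ?thesis
  proof eventually_elim
    case (elim k)
    hence s: "real N + 2 \<le> s k" "0 < \<gamma> * k - 1/\<beta> - 3/2 * s k + 1" by (simp_all add: s_def)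
    define n where "n = nat \<lfloor>s k\<rfloor>"
    have n: "real n \<le> s k" "s k - 1 < real n" using s(1) unfolding n_def by linarith+
    have "0 < s k" using s(1) by linarith
    hence "0 < 2 * (real k - 1) / \<beta>" unfolding s_def by (metis real_sqrt_gt_0_iff)
    hence s2: "s k ^ 2 = 2 * (real k - 1) / \<beta>" unfolding s_def by simp
    have "real n * (real n - 1) \<le> s k ^ 2"
      using n s(1) by (simp add: power2_eq_square mult_mono)
    hence "\<beta> * (n choose 2) + 1 \<le> real k"
      using s2 \<open>\<beta> > 0\<close> by (simp add: real_choose_two field_simps)
    moreover have "N \<le> n" using n s(1) by linarith
    ultimately have "real (n choose 2) \<le> E k" using bound by blast
    moreover have "(s k - 1) * (s k - 2) \<le> real n * (real n - 1)"
      using n s(1) by (intro mult_mono) auto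
    hence "(real k - 1) / \<beta> - 3/2 * s k + 1 \<le> real (n choose 2)"
      using s2 by (simp add: real_choose_two power2_eq_square algebra_simps)
    moreover have "a * k = (real k - 1) / \<beta> - \<gamma> * k + 1/\<beta>"
      using \<open>\<beta> > 0\<close> unfolding \<gamma>_def by (simp add: field_simps)
    ultimately show ?case using s(2) by linarith
  qed
qed

lemma tendsto_ratio_of_choose_bounds:
  fixes E :: "nat \<Rightarrow> real" and L :: real
  assumes "L > 0" and upper: "\<forall>k\<ge>1. E k \<le> L * k"
    and lower: "\<forall>\<beta>>1/L. \<exists>N. \<forall>n\<ge>N. \<forall>k. \<beta> * (n choose 2) + 1 \<le> real k \<longrightarrow> real (n choose 2) \<le> E k"
  shows "(\<lambda>k. E k / k) \<longlonglongrightarrow> L"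
  unfolding order_tendsto_iff
proof (intro conjI allI impI)
  fix a assume "a < L"
  define b where "b = max a (L/2)"
  have "0 < b" "b < L" "a \<le> b" using \<open>L > 0\<close> \<open>a < L\<close> by (auto simp: b_def)
  define \<beta> where "\<beta> = (1/L + 1/b) / 2"
  have "1/L < 1/b" using \<open>0 < b\<close> \<open>b < L\<close> by (simp add: frac_less2)
  hence "1/L < \<beta>" unfolding \<beta>_def by (rule field_less_half_sum)
  moreover have "0 < 1/L" using \<open>L > 0\<close> by simp
  ultimately have "0 < \<beta>" by (metis less_trans)
  have "b * \<beta> = (1 + b/L) / 2" using \<open>0 < b\<close> by (simp add: \<beta>_def field_simps)
  also have "\<dots> < 1" using \<open>b < L\<close> \<open>L > 0\<close> by simp
  moreover have "a * \<beta> \<le> b * \<beta>" using \<open>a \<le> b\<close> \<open>0 < \<beta>\<close> by (simp add: mult_right_mono)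
  ultimately have "a * \<beta> < 1" by linarith
  then obtain N where "\<forall>n\<ge>N. \<forall>k. \<beta> * (n choose 2) + 1 \<le> real k \<longrightarrow> real (n choose 2) \<le> E k"
    using lower \<open>1/L < \<beta>\<close> by blast
  from eventually_less_of_choose_bound[OF \<open>0 < \<beta>\<close> \<open>a * \<beta> < 1\<close> this]
  show "eventually (\<lambda>k. a < E k / k) sequentially"
    using eventually_gt_at_top[of 0] by eventually_elim (simp add: field_simps)
next
  fix a assume "L < a"
  show "eventually (\<lambda>k. E k / k < a) sequentially"
    using eventually_ge_at_top[of 1]
  proof eventually_elim
    case (elim k)
    hence "E k \<le> L * k" using upper by blast
    hence "E k / k \<le> L" using elim by (simp add: pos_divide_le_eq)
    thus ?case using \<open>L < a\<close> by linarith
  qed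
qed

lemma ereal_tendsto_ratio_of_choose_bounds:
  fixes f :: "nat \<Rightarrow> ereal" and L :: real
  assumes "L > 0" and upper: "\<forall>k. f k \<le> ereal (L * k)" and nonneg: "\<forall>k\<ge>1. 0 \<le> f k"
    and lower: "\<forall>\<beta>>1/L. \<exists>N. \<forall>n\<ge>N. \<forall>k. \<beta> * (n choose 2) + 1 \<le> real k \<longrightarrow> ereal (n choose 2) \<le> f k"
  shows "(\<lambda>k. f k / ereal k) \<longlonglongrightarrow> ereal L"
proof -
  define E where "E k = real_of_ereal (f k)" for k
  have f: "f k = ereal (E k)" if "k \<ge> 1" for k
    using upper[rule_format, of k] nonneg that unfolding E_def by (cases "f k") auto
  have "(\<lambda>k. E k / k) \<longlonglongrightarrow> L"
  proof (rule tendsto_ratio_of_choose_bounds[OF \<open>L > 0\<close>])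
    show "\<forall>k\<ge>1. E k \<le> L * k" using upper f by (metis ereal_less_eq(3))
    show "\<forall>\<beta>>1/L. \<exists>N. \<forall>n\<ge>N. \<forall>k. \<beta> * (n choose 2) + 1 \<le> real k \<longrightarrow> real (n choose 2) \<le> E k"
    proof (intro allI impI)
      fix \<beta> :: real assume "1/L < \<beta>"
      then obtain N where N: "\<forall>n\<ge>N. \<forall>k. \<beta> * (n choose 2) + 1 \<le> real k \<longrightarrow> ereal (n choose 2) \<le> f k"
        using lower by blast
      have "real (n choose 2) \<le> E k" if "N \<le> n" "\<beta> * (n choose 2) + 1 \<le> real k" for n k
      proof -
        have "0 < 1/L" using \<open>L > 0\<close> by simp
        hence "0 < \<beta>" using \<open>1/L < \<beta>\<close> by (metis less_trans)
        hence "0 \<le> \<beta> * (n choose 2)" by simp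
        hence "k \<ge> 1" using that(2) by simp
        thus ?thesis using N that f by fastforce
      qed
      thus "\<exists>N. \<forall>n\<ge>N. \<forall>k. \<beta> * (n choose 2) + 1 \<le> real k \<longrightarrow> real (n choose 2) \<le> E k" by blast
    qed
  qed
  hence "(\<lambda>k. ereal (E k / k)) \<longlonglongrightarrow> ereal L" by simp
  moreover have "eventually (\<lambda>k. ereal (E k / k) = f k / ereal k) sequentially"
    using eventually_ge_at_top[of 1] by eventually_elim (simp add: f ereal_divide)
  ultimately show ?thesis by (rule Lim_transform_eventually)
qed

theorem theorem1p1:
  fixes Hs :: "nat set set set" and \<rho> :: nat
  assumes "\<forall>H\<in>Hs. graph H"
    and "\<exists>H\<in>Hs. chromatic_number H = \<rho>"
    and "\<forall>H\<in>Hs. \<rho> \<le> chromatic_number H"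
    and "\<rho> \<ge> 3"
  shows "((\<lambda>k. E_fun Hs k / ereal (real k))
           \<longlongrightarrow> ereal (1 + 1 / (real \<rho> - 2))) sequentially"
proof -
  obtain H where H: "H \<in> Hs" "chromatic_number H = \<rho>" using assms(2) by blast
  define r where "r = \<rho> - 1"
  have \<rho>: "\<rho> = Suc r" "r \<ge> 2" using assms(4) unfolding r_def by auto
  have Hs: "\<forall>H\<in>Hs. r < chromatic_number H" using assms(3) \<rho>(1) by fastforce
  hence "free_of Hs {}" by (metis chromatic_number_empty free_of_empty not_less0)
  obtain c where c: "proper_colouring H c (Suc r)"
    using proper_colouring_chromatic_number assms(1) H \<rho>(1) by metis
  have L: "1 + 1 / (real \<rho> - 2) = real r / (real r - 1)" using \<rho> by (simp add: field_simps)
  have inv_L: "1 / (real r / (real r - 1)) = 1 - 1/r" using \<rho>(2) by (simp add: field_simps)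
  show ?thesis unfolding L
  proof (rule ereal_tendsto_ratio_of_choose_bounds)
    show "0 < real r / (real r - 1)" using \<rho>(2) by simp
    show "\<forall>k. E_fun Hs k \<le> ereal (real r / (real r - 1) * k)" using E_fun_le \<rho>(2) Hs by blast
    show "\<forall>k\<ge>1. 0 \<le> E_fun Hs k"
      using card_le_E_fun[of "{}" Hs] \<open>free_of Hs {}\<close> by (simp add: graph_def zero_ereal_def)
    show "\<forall>\<beta>>1 / (real r / (real r - 1)). \<exists>N. \<forall>n\<ge>N. \<forall>k.
        \<beta> * (n choose 2) + 1 \<le> real k \<longrightarrow> ereal (n choose 2) \<le> E_fun Hs k"
      using choose_le_E_fun[OF H(1) _ c] assms(1) H(1) \<rho>(2) \<open>free_of Hs {}\<close> unfolding inv_L by simp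
  qed
qed

end
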